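(* Let $n\geq 1$ and $k\geq 2$ be integers. Then \[C_k(n)\leq \sum_{t=1}^{\lfloor n/2\rfloor} k^t A_k(n-2t,0^t)+n k^{\lceil n/2\rceil},\] where $0^t$ denotes the word consisting of $t$ zeros.
   Context: Words are over $\Sigma_k=\{0,1,\ldots,k-1\}$. A border of a word $w$ is a non-empty word that is both a proper prefix and a proper suffix of $w$. A word $w$ is closed if $|w|\leq 1$ or if $w$ has a border that occurs exactly twice in $w$ as a factor (overlapping occurrences counted). $C_k(n)$ denotes the number of closed words of length $n$ over $\Sigma_k$. $A_k(m,v)$ denotes the number of words of length $m$ over $\Sigma_k$ that do not contain $v$ as a factor (for $m=0$ the empty word is counted). *)

theory Defs
  imports Main
begin

definition words :: "nat \<Rightarrow> nat \<Rightarrow> nat list set" where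
  "words k n = {w. length w = n \<and> set w \<subseteq> {..<k}}"

definition is_factor :: "'a list \<Rightarrow> 'a list \<Rightarrow> bool" where
  "is_factor u w \<longleftrightarrow> (\<exists>x y. w = x @ u @ y)"

definition occ :: "'a list \<Rightarrow> 'a list \<Rightarrow> nat" where
  "occ u w = card {i. i + length u \<le> length w \<and> take (length u) (drop i w) = u}"

definition is_border :: "'a list \<Rightarrow> 'a list \<Rightarrow> bool" where
  "is_border u w \<longleftrightarrow> u \<noteq> [] \<and> length u < length w \<and>
     (\<exists>x. w = u @ x) \<and> (\<exists>x. w = x @ u)"

definition closed_word :: "'a list \<Rightarrow> bool" where
  "closed_word w \<longleftrightarrow> length w \<le> 1 \<or> (\<exists>u. is_border u w \<and> occ u w = 2)"

definition C :: "nat \<Rightarrow> nat \<Rightarrow> nat" where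
  "C k n = card {w \<in> words k n. closed_word w}"

definition A :: "nat \<Rightarrow> nat \<Rightarrow> nat list \<Rightarrow> nat" where
  "A k m v = card {w \<in> words k m. \<not> is_factor v w}"

end

(* Let u be a border of the closed word w, |w| = n, that occurs exactly twice in w.  If
   2|u| > n, then w has period n - |u| <= (n+1)/2 and is determined by its prefix of that
   length, giving at most n k^ceil(n/2) words.  Otherwise w = u z u, and u is not a factor
   of z since that would be a third occurrence; for |u| = t this gives at most
   k^t A_k(n-2t, u) words.  Finally A_k(m, u) <= A_k(m, 0^t): recoding a word letter by
   letter, writing 0 exactly when the letter extends the longest prefix of u that ends at
   the current position, maps the words avoiding u injectively to words avoiding 0^t. *)
theory Submission
  imports Defs "HOL-Library.Sublist" "HOL-Library.More_List" "HOL-Combinatorics.Transposition"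
begin

lemma is_factor_iff_sublist: "is_factor u w \<longleftrightarrow> sublist u w"
  by (simp add: is_factor_def sublist_def)

lemma words_eq_lists: "words k n = {w. set w \<subseteq> {..<k} \<and> length w = n}"
  by (auto simp: words_def)

lemma card_words: "card (words k n) = k ^ n"
  using card_lists_length_eq[of "{..<k}" n] by (simp add: words_eq_lists)

lemma finite_words [simp]: "finite (words k n)"
  using finite_lists_length_eq[of "{..<k}" n] by (simp add: words_eq_lists)

definition overlap :: "'a list \<Rightarrow> 'a list \<Rightarrow> nat" where
  "overlap u p = Max {i. i \<le> length u \<and> suffix (take i u) p}"

lemma
  shows overlap_le_length: "overlap u p \<le> length u"
    and suffix_take_overlap: "suffix (take (overlap u p) u) p"
    and overlap_maximal: "i \<le> length u \<Longrightarrow> suffix (take i u) p \<Longrightarrow> i \<le> overlap u p"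
proof -
  let ?S = "{i. i \<le> length u \<and> suffix (take i u) p}"
  have "finite ?S" by (rule finite_subset[of _ "{..length u}"]) auto
  moreover have "0 \<in> ?S" by simp
  ultimately have "overlap u p \<in> ?S" unfolding overlap_def by (intro Max_in) auto
  then show "overlap u p \<le> length u" "suffix (take (overlap u p) u) p" by simp_all
  show "i \<le> overlap u p" if "i \<le> length u" "suffix (take i u) p"
    unfolding overlap_def using \<open>finite ?S\<close> that by (intro Max_ge) auto
qed

lemma overlap_snoc_nth:
  assumes "overlap u p < length u"
  shows "Suc (overlap u p) \<le> overlap u (p @ [u ! overlap u p])"
proof (rule overlap_maximal)
  show "Suc (overlap u p) \<le> length u" using assms by simp
  have "take (Suc (overlap u p)) u = take (overlap u p) u @ [u ! overlap u p]"
    using assms by (simp add: take_Suc_conv_app_nth)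
  then show "suffix (take (Suc (overlap u p)) u) (p @ [u ! overlap u p])"
    using suffix_take_overlap[of u p] by (auto simp: suffix_def)
qed

text \<open>The letter that extends the current match with \<open>u\<close> is swapped with \<open>c\<close>; once all
  of \<open>u\<close> has been matched, \<open>nth_default\<close> makes the transposition the identity.\<close>

fun match_code :: "'a \<Rightarrow> 'a list \<Rightarrow> 'a list \<Rightarrow> 'a list \<Rightarrow> 'a list" where
  "match_code c u p [] = []"
| "match_code c u p (a # w) =
     Transposition.transpose c (nth_default c u (overlap u p)) a # match_code c u (p @ [a]) w"

lemma length_match_code [simp]: "length (match_code c u p w) = length w"
  by (induction w arbitrary: p) auto

lemma set_match_code_subset:
  assumes "c \<in> S" "set u \<subseteq> S"
  shows "set w \<subseteq> S \<Longrightarrow> set (match_code c u p w) \<subseteq> S"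
proof (induction w arbitrary: p)
  case (Cons a w)
  have "nth_default c u (overlap u p) \<in> S"
    using assms by (auto simp: nth_default_def)
  with Cons assms(1) show ?case by (auto simp: transpose_def)
qed simp

lemma match_code_eq_imp_eq: "match_code c u p w = match_code c u p w' \<Longrightarrow> w = w'"
proof (induction w arbitrary: p w')
  case (Cons a w)
  then obtain a' w'' where "w' = a' # w''" by (cases w') auto
  with Cons show ?case by (auto dest: transpose_eq_imp_eq)
qed (simp add: eq_commute[of "[]"] flip: length_0_conv)

lemma sublist_append_if_overlap_eq_length:
  "overlap u p = length u \<Longrightarrow> sublist u (p @ w)"
  using suffix_take_overlap[of u p] by (auto elim!: suffixE)

lemma sublist_if_prefix_replicate_match_code:
  "r \<le> overlap u p \<Longrightarrow> prefix (replicate (length u - r) c) (match_code c u p w)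
    \<Longrightarrow> sublist u (p @ w)"
proof (induction w arbitrary: p r)
  case Nil
  then show ?case
    using overlap_le_length[of u p] sublist_append_if_overlap_eq_length[of u p "[]"]
    by (cases "overlap u p < length u") auto
next
  case (Cons a w)
  show ?case
  proof (cases "overlap u p < length u")
    case True
    then obtain j where j: "length u - r = Suc j" using Cons.prems(1) by (cases "length u - r") auto
    with Cons.prems(2) have
      "Transposition.transpose c (u ! overlap u p) a = c"
      "prefix (replicate j c) (match_code c u (p @ [a]) w)"
      using True by (simp_all add: nth_default_nth)
    then have "a = u ! overlap u p" by (auto simp: transpose_eq_iff)
    then have "Suc r \<le> overlap u (p @ [a])"
      using overlap_snoc_nth[OF True] Cons.prems(1) by simp
    moreover have "length u - Suc r = j" using j by simp
    ultimately have "sublist u ((p @ [a]) @ w)"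
      using \<open>prefix (replicate j c) _\<close> by (intro Cons.IH[of "Suc r"]) simp_all
    then show ?thesis by simp
  next
    case False
    then show ?thesis
      using overlap_le_length[of u p] sublist_append_if_overlap_eq_length[of u p] by simp
  qed
qed

lemma sublist_if_sublist_replicate_match_code:
  "sublist (replicate (length u) c) (match_code c u p w) \<Longrightarrow> sublist u (p @ w)"
proof (induction w arbitrary: p)
  case Nil
  then show ?case by simp
next
  case (Cons a w)
  then consider "prefix (replicate (length u) c) (match_code c u p (a # w))"
    | "sublist (replicate (length u) c) (match_code c u (p @ [a]) w)"
    by (auto simp: sublist_Cons_right)
  then show ?case
  proof cases
    case 1
    then show ?thesis using sublist_if_prefix_replicate_match_code[of 0 u p c "a # w"] by simp
  next
    case 2
    then show ?thesis using Cons.IH[of "p @ [a]"] by simp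
  qed
qed

lemma A_le_A_replicate_zero:
  assumes "0 < k" "u \<in> words k t"
  shows "A k m u \<le> A k m (replicate t 0)"
proof -
  have u: "set u \<subseteq> {..<k}" "length u = t" using assms(2) by (auto simp: words_def)
  let ?code = "match_code 0 u []"
  have "inj_on ?code {w \<in> words k m. \<not> is_factor u w}"
    by (rule inj_onI) (rule match_code_eq_imp_eq)
  moreover have "?code ` {w \<in> words k m. \<not> is_factor u w}
      \<subseteq> {w \<in> words k m. \<not> is_factor (replicate t 0) w}"
    using sublist_if_sublist_replicate_match_code[of u 0 "[]"]
      set_match_code_subset[of 0 "{..<k}" u] assms(1) u
    by (auto simp: words_def is_factor_iff_sublist)
  ultimately show ?thesis
    unfolding A_def by (intro card_inj_on_le) auto
qed

definition periodic_word :: "nat \<Rightarrow> 'a list \<Rightarrow> 'a list" where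
  "periodic_word n y = map (\<lambda>i. y ! (i mod length y)) [0..<n]"

lemma periodic_word_if_border:
  assumes "w = u @ x" "w = y @ u" "y \<noteq> []"
  shows "w = periodic_word (length w) y"
proof -
  have "w ! i = y ! (i mod length y)" if "i < length w" for i
    using that
  proof (induction i rule: less_induct)
    case (less i)
    show ?case
    proof (cases "i < length y")
      case True
      then show ?thesis using assms(2) by (simp add: nth_append)
    next
      case False
      have "length w = length y + length u" using assms(2) by simp
      then have i: "i - length y < length u" using less.prems False by linarith
      have "w ! i = u ! (i - length y)" using assms(2) False by (simp add: nth_append)
      also have "\<dots> = w ! (i - length y)" using assms(1) i by (simp add: nth_append)
      also have "\<dots> = y ! ((i - length y) mod length y)"
        using less.IH[of "i - length y"] less.prems assms(3) False by (cases y) auto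
      also have "\<dots> = y ! (i mod length y)" using False by (simp add: le_mod_geq)
      finally show ?thesis .
    qed
  qed
  then show ?thesis by (intro nth_equalityI) (simp_all add: periodic_word_def)
qed

lemma occ_ge_three_if_sublist:
  assumes "sublist u z" "u \<noteq> []"
  shows "3 \<le> occ u (u @ z @ u)"
proof -
  obtain a b where z: "z = a @ u @ b" using assms(1) by (auto simp: sublist_def)
  define w where "w = u @ z @ u"
  define S where "S = {i. i + length u \<le> length w \<and> take (length u) (drop i w) = u}"
  have "0 \<in> S" "length u + length a \<in> S" "length w - length u \<in> S"
    unfolding S_def w_def z by simp_all
  moreover have "finite S" unfolding S_def by (rule finite_subset[of _ "{..length w}"]) auto
  moreover have "card {0, length u + length a, length w - length u} = 3"
    using assms(2) unfolding w_def z by simp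
  ultimately have "3 \<le> card S" by (metis card_mono empty_subsetI insert_subset)
  then show ?thesis unfolding occ_def S_def w_def .
qed

lemma closed_word_cases:
  assumes "closed_word w" "w \<noteq> []"
  obtains y where "y \<noteq> []" "2 * length y \<le> length w + 1" "set y \<subseteq> set w"
      "w = periodic_word (length w) y"
    | u z where "u \<noteq> []" "w = u @ z @ u" "\<not> sublist u z"
proof -
  consider "length w \<le> 1" | u where "is_border u w" "occ u w = 2"
    using assms(1) unfolding closed_word_def by blast
  then show thesis
  proof cases
    case 1
    then have "2 * length w \<le> length w + 1" by simp
    moreover have "w = periodic_word (length w) w"
      using 1 assms(2) by (intro nth_equalityI) (auto simp: periodic_word_def)
    ultimately show thesis using assms(2) by (intro that(1)) simp_all
  next
    case 2
    then obtain x y where u: "u \<noteq> []" "length u < length w" "w = u @ x" "w = y @ u"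
      unfolding is_border_def by blast
    show thesis
    proof (cases "2 * length u \<le> length w")
      case True
      have "suffix u w" "suffix x w" using suffixI u(3,4) by blast+
      moreover have "length u \<le> length x" using u True by simp
      ultimately have "suffix u x" by (rule suffix_length_suffix)
      then obtain z where "x = z @ u" by (rule suffixE)
      with u have w: "w = u @ z @ u" by simp
      have "\<not> sublist u z"
      proof
        assume "sublist u z"
        then have "3 \<le> occ u w" using occ_ge_three_if_sublist u(1) w by simp
        with 2(2) show False by simp
      qed
      with u(1) w show thesis by (rule that(2))
    next
      case False
      have "length y = length w - length u" using u(4) by simp
      then have "y \<noteq> []" "2 * length y \<le> length w + 1" using u(2) False by auto
      moreover have "set y \<subseteq> set w" using u(4) by simp
      moreover have "w = periodic_word (length w) y"
        using u(3,4) \<open>y \<noteq> []\<close> by (rule periodic_word_if_border)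
      ultimately show thesis by (rule that(1))
    qed
  qed
qed

definition periodic_words :: "nat \<Rightarrow> nat \<Rightarrow> nat \<Rightarrow> nat list set" where
  "periodic_words k n q = (\<Union>p\<in>{1..q}. periodic_word n ` words k p)"

definition framed_words :: "nat \<Rightarrow> nat \<Rightarrow> nat \<Rightarrow> nat list set" where
  "framed_words k t m = (\<Union>u\<in>words k t. (\<lambda>z. u @ z @ u) ` {z \<in> words k m. \<not> is_factor u z})"

lemma finite_periodic_words [simp]: "finite (periodic_words k n q)"
  by (simp add: periodic_words_def)

lemma finite_framed_words [simp]: "finite (framed_words k t m)"
  by (simp add: framed_words_def)

lemma closed_words_subset:
  assumes "0 < n"
  shows "{w \<in> words k n. closed_word w}
    \<subseteq> periodic_words k n ((n + 1) div 2) \<union> (\<Union>t\<in>{1..n div 2}. framed_words k t (n - 2 * t))"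
proof
  fix w assume "w \<in> {w \<in> words k n. closed_word w}"
  then have w: "closed_word w" "length w = n" "set w \<subseteq> {..<k}" by (auto simp: words_def)
  have "w \<noteq> []" using w(2) assms by auto
  with w(1) show "w \<in> periodic_words k n ((n + 1) div 2)
      \<union> (\<Union>t\<in>{1..n div 2}. framed_words k t (n - 2 * t))"
  proof (cases rule: closed_word_cases)
    case (1 y)
    have "w = periodic_word n y" using 1(4) unfolding w(2) .
    moreover have "y \<in> words k (length y)" "length y \<in> {1..(n + 1) div 2}"
      using 1 w by (auto simp: words_def Suc_le_eq)
    ultimately show ?thesis unfolding periodic_words_def by blast
  next
    case (2 u z)
    then have "u \<in> words k (length u)" "z \<in> words k (n - 2 * length u)"
      "length u \<in> {1..n div 2}" "\<not> is_factor u z"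
      using w by (auto simp: words_def is_factor_iff_sublist Suc_le_eq)
    then show ?thesis using 2(2) unfolding framed_words_def by blast
  qed
qed

lemma card_periodic_words_le:
  assumes "0 < k"
  shows "card (periodic_words k n q) \<le> q * k ^ q"
proof -
  have "card (periodic_words k n q) \<le> (\<Sum>p = 1..q. card (periodic_word n ` words k p))"
    unfolding periodic_words_def by (rule card_UN_le) simp
  also have "\<dots> \<le> (\<Sum>p = 1..q. k ^ q)"
  proof (rule sum_mono)
    fix p assume "p \<in> {1..q}"
    then have "k ^ p \<le> k ^ q" using assms by (intro power_increasing) auto
    then show "card (periodic_word n ` words k p) \<le> k ^ q"
      using card_image_le[OF finite_words, of "periodic_word n" k p] by (simp add: card_words)
  qed
  finally show ?thesis by simp
qed

lemma card_framed_words_le: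
  assumes "0 < k"
  shows "card (framed_words k t m) \<le> k ^ t * A k m (replicate t 0)"
proof -
  have "card (framed_words k t m)
      \<le> (\<Sum>u\<in>words k t. card ((\<lambda>z. u @ z @ u) ` {z \<in> words k m. \<not> is_factor u z}))"
    unfolding framed_words_def by (rule card_UN_le) simp
  also have "\<dots> \<le> (\<Sum>u\<in>words k t. A k m (replicate t 0))"
  proof (rule sum_mono)
    fix u assume u: "u \<in> words k t"
    have "card ((\<lambda>z. u @ z @ u) ` {z \<in> words k m. \<not> is_factor u z}) \<le> A k m u"
      unfolding A_def by (rule card_image_le) simp
    also have "\<dots> \<le> A k m (replicate t 0)" using assms u by (rule A_le_A_replicate_zero)
    finally show "card ((\<lambda>z. u @ z @ u) ` {z \<in> words k m. \<not> is_factor u z})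
      \<le> A k m (replicate t 0)" .
  qed
  finally show ?thesis by (simp add: card_words)
qed

theorem corollary8:
  fixes n k :: nat
  assumes "n \<ge> 1" and "k \<ge> 2"
  shows "C k n \<le> (\<Sum>t = 1..n div 2. k ^ t * A k (n - 2 * t) (replicate t 0))
                  + n * k ^ ((n + 1) div 2)"
proof -
  have k: "0 < k" using assms(2) by simp
  let ?q = "(n + 1) div 2"
  have "C k n \<le> card (periodic_words k n ?q \<union> (\<Union>t\<in>{1..n div 2}. framed_words k t (n - 2 * t)))"
    unfolding C_def using closed_words_subset assms(1) by (intro card_mono) simp_all
  also have "\<dots> \<le> card (periodic_words k n ?q) + (\<Sum>t = 1..n div 2. card (framed_words k t (n - 2 * t)))"
    by (intro order.trans[OF card_Un_le] add_left_mono card_UN_le) simp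
  also have "\<dots> \<le> ?q * k ^ ?q + (\<Sum>t = 1..n div 2. k ^ t * A k (n - 2 * t) (replicate t 0))"
    using k by (intro add_mono sum_mono card_periodic_words_le card_framed_words_le)
  also have "?q * k ^ ?q \<le> n * k ^ ?q" using assms(1) by (intro mult_right_mono) simp_all
  finally show ?thesis by simp
qed

end
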